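(* Let $T$ be a tree on $n$ vertices, let $v$ be a vertex of $T$, and let $\mathrm{SFS}(T,v)=(F_1,\dots,F_n)$. Then $$X_T=\sum_{i=1}^n p_i F_i.$$
   Context: For a graph $G$, a proper coloring is a map $\kappa: V(G)\to\mathbb{N}=\{1,2,\dots\}$ with $\kappa(u)\neq\kappa(w)$ whenever $uw\in E(G)$. With commuting indeterminates $x_1,x_2,\dots$, the chromatic symmetric function is $X_G=\sum_\kappa \prod_{u\in V(G)} x_{\kappa(u)}$ over all proper colorings $\kappa$ of $G$, and for a vertex $v$ and $c\in\mathbb{N}$, $Z_G^v(c)$ is the same sum restricted to proper colorings with $\kappa(v)=c$. The power-sum symmetric functions are $p_i=\sum_{j\ge1}x_j^i$. For a tree $T$ on $n$ vertices and a vertex $v$, the symmetric function sequence $\mathrm{SFS}(T,v)=(F_1,\dots,F_n)$ is the unique $n$-tuple of symmetric functions in $x_1,x_2,\dots$ such that $Z_T^v(c)=\sum_{i=1}^n x_c^iF_i$ for every $c\in\mathbb{N}$ (such a tuple exists and is unique). *)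

theory Defs
  imports Complex_Main "HOL-Library.FuncSet"
begin

definition simple_graph :: "'a set \<Rightarrow> 'a set set \<Rightarrow> bool" where
  "simple_graph V E \<longleftrightarrow> finite V \<and> (\<forall>e\<in>E. \<exists>a b. a \<in> V \<and> b \<in> V \<and> a \<noteq> b \<and> e = {a, b})"

definition walk_adj :: "'a set set \<Rightarrow> 'a list \<Rightarrow> bool" where
  "walk_adj E xs \<longleftrightarrow> (\<forall>i. Suc i < length xs \<longrightarrow> {xs ! i, xs ! Suc i} \<in> E)"

definition graph_path :: "'a set \<Rightarrow> 'a set set \<Rightarrow> 'a list \<Rightarrow> bool" where
  "graph_path V E xs \<longleftrightarrow> xs \<noteq> [] \<and> distinct xs \<and> set xs \<subseteq> V \<and> walk_adj E xs"

definition graph_connected :: "'a set \<Rightarrow> 'a set set \<Rightarrow> bool" where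
  "graph_connected V E \<longleftrightarrow>
     (\<forall>u\<in>V. \<forall>w\<in>V. \<exists>xs. graph_path V E xs \<and> hd xs = u \<and> last xs = w)"

definition graph_cycle :: "'a set \<Rightarrow> 'a set set \<Rightarrow> 'a list \<Rightarrow> bool" where
  "graph_cycle V E xs \<longleftrightarrow> length xs \<ge> 3 \<and> graph_path V E xs \<and> {last xs, hd xs} \<in> E"

definition is_tree :: "'a set \<Rightarrow> 'a set set \<Rightarrow> bool" where
  "is_tree V E \<longleftrightarrow> simple_graph V E \<and> V \<noteq> {} \<and> graph_connected V E
                     \<and> \<not> (\<exists>xs. graph_cycle V E xs)"

text \<open>A monomial x^alpha is encoded by its exponent function alpha :: nat => nat
  (alpha k = exponent of x_k); a formal power series is its coefficient function.
  The variable x_0 does not exist: proper series have zero coefficient whenever alpha 0 \<noteq> 0.\<close>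

type_synonym mon = "nat \<Rightarrow> nat"
type_synonym 'r ser = "mon \<Rightarrow> 'r"

definition mon_support :: "mon \<Rightarrow> nat set" where
  "mon_support \<alpha> = {k. \<alpha> k \<noteq> 0}"

definition mon_degree :: "mon \<Rightarrow> nat" where
  "mon_degree \<alpha> = (\<Sum>k\<in>mon_support \<alpha>. \<alpha> k)"

definition ser_mult :: "'r::comm_semiring_1 ser \<Rightarrow> 'r ser \<Rightarrow> 'r ser" where
  "ser_mult f g = (\<lambda>\<alpha>. \<Sum>\<beta>\<in>{\<beta>. \<forall>k. \<beta> k \<le> \<alpha> k}. f \<beta> * g (\<lambda>k. \<alpha> k - \<beta> k))"

definition var_pow :: "nat \<Rightarrow> nat \<Rightarrow> 'r::comm_semiring_1 ser" where
  "var_pow c i = (\<lambda>\<alpha>. if \<alpha> = (\<lambda>k. if k = c then i else 0) then 1 else 0)"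

definition power_sum :: "nat \<Rightarrow> 'r::comm_semiring_1 ser" where
  "power_sum i = (\<lambda>\<alpha>. if \<exists>j\<ge>1. \<alpha> = (\<lambda>k. if k = j then i else 0) then 1 else 0)"

definition symmetric_function :: "'r::comm_semiring_1 ser \<Rightarrow> bool" where
  "symmetric_function f \<longleftrightarrow>
     (\<forall>\<alpha>. f \<alpha> \<noteq> 0 \<longrightarrow> finite (mon_support \<alpha>) \<and> \<alpha> 0 = 0)
   \<and> (\<exists>d. \<forall>\<alpha>. f \<alpha> \<noteq> 0 \<longrightarrow> mon_degree \<alpha> \<le> d)
   \<and> (\<forall>\<sigma> \<alpha>. bij \<sigma> \<and> \<sigma> 0 = 0 \<longrightarrow> f (\<alpha> \<circ> \<sigma>) = f \<alpha>)"

text \<open>Proper colorings V -> {1,2,...} (extensional, so that the sets are finite).\<close>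

definition proper_colorings :: "'a set \<Rightarrow> 'a set set \<Rightarrow> ('a \<Rightarrow> nat) set" where
  "proper_colorings V E =
     {\<kappa> \<in> V \<rightarrow>\<^sub>E {1..}. \<forall>u w. {u, w} \<in> E \<longrightarrow> \<kappa> u \<noteq> \<kappa> w}"

text \<open>Monomial of a coloring: prod over u of x_(kappa u), i.e. exponent of x_j is |kappa^-1(j)|.\<close>

definition coloring_mon :: "'a set \<Rightarrow> ('a \<Rightarrow> nat) \<Rightarrow> mon" where
  "coloring_mon V \<kappa> = (\<lambda>j. card {u \<in> V. \<kappa> u = j})"

definition chrom_sym :: "'a set \<Rightarrow> 'a set set \<Rightarrow> 'r::comm_semiring_1 ser" where
  "chrom_sym V E = (\<lambda>\<alpha>. of_nat (card {\<kappa> \<in> proper_colorings V E. coloring_mon V \<kappa> = \<alpha>}))"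

definition chrom_Z :: "'a set \<Rightarrow> 'a set set \<Rightarrow> 'a \<Rightarrow> nat \<Rightarrow> 'r::comm_semiring_1 ser" where
  "chrom_Z V E v c =
     (\<lambda>\<alpha>. of_nat (card {\<kappa> \<in> proper_colorings V E. \<kappa> v = c \<and> coloring_mon V \<kappa> = \<alpha>}))"

definition is_SFS :: "'a set \<Rightarrow> 'a set set \<Rightarrow> 'a \<Rightarrow> (nat \<Rightarrow> 'r::comm_semiring_1 ser) \<Rightarrow> bool" where
  "is_SFS V E v F \<longleftrightarrow>
     (\<forall>i\<in>{1..card V}. symmetric_function (F i))
   \<and> (\<forall>c\<ge>1. chrom_Z V E v c = (\<lambda>\<alpha>. \<Sum>i=1..card V. ser_mult (var_pow c i) (F i) \<alpha>))"

end

theory Submission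
  imports Defs
begin

text \<open>Grouping the proper colorings of \<open>T\<close> by the colour \<open>c\<close> of \<open>v\<close> gives
  \<open>X\<^sub>T = \<Sum>\<^sub>c Z\<^sub>T\<^sup>v(c) = \<Sum>\<^sub>i (\<Sum>\<^sub>c x\<^sub>c\<^sup>i) F\<^sub>i = \<Sum>\<^sub>i p\<^sub>i F\<^sub>i\<close>.
  Coefficientwise, only the finitely many colours \<open>c\<close> with \<open>\<alpha> c \<noteq> 0\<close> contribute to the
  coefficient of \<open>x\<^sup>\<alpha>\<close>; when \<open>\<alpha>\<close> has infinite support every coefficient involved is \<open>0\<close>.\<close>

lemma mon_support_coloring_mon:
  assumes "finite V"
  shows "mon_support (coloring_mon V \<kappa>) = \<kappa> ` V"
  using assms by (auto simp: mon_support_def coloring_mon_def card_eq_0_iff)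

lemma chrom_sym_eq_sum_chrom_Z:
  assumes "finite V" and "v \<in> V"
  shows "chrom_sym V E \<alpha> = (\<Sum>c\<in>{c. 1 \<le> c \<and> \<alpha> c \<noteq> 0}. chrom_Z V E v c \<alpha>)"
proof -
  define S where "S = {c. 1 \<le> c \<and> \<alpha> c \<noteq> 0}"
  let ?A = "{\<kappa> \<in> proper_colorings V E. coloring_mon V \<kappa> = \<alpha>}"
  let ?Ac = "\<lambda>c. {\<kappa> \<in> proper_colorings V E. \<kappa> v = c \<and> coloring_mon V \<kappa> = \<alpha>}"
  show ?thesis
  proof (cases "?A = {}")
    case True
    then have "?Ac c = {}" for c by blast
    with True show ?thesis unfolding chrom_sym_def chrom_Z_def by (simp only: card.empty) simp
  next
    case False
    then obtain \<kappa>\<^sub>0 where "\<kappa>\<^sub>0 \<in> ?A" by blast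
    have support: "\<kappa> \<in> V \<rightarrow>\<^sub>E {1..} \<and> \<kappa> ` V = mon_support \<alpha>" if "\<kappa> \<in> ?A" for \<kappa>
      using that mon_support_coloring_mon[OF \<open>finite V\<close>] by (auto simp: proper_colorings_def)
    have "finite (mon_support \<alpha>)"
      using support[OF \<open>\<kappa>\<^sub>0 \<in> ?A\<close>] \<open>finite V\<close> by (metis finite_imageI)
    then have "finite S" by (auto simp: S_def mon_support_def intro: finite_subset)
    have "?A \<subseteq> V \<rightarrow>\<^sub>E mon_support \<alpha>"
      using support by (fastforce simp: PiE_iff)
    then have "finite ?A"
      using \<open>finite V\<close> \<open>finite (mon_support \<alpha>)\<close> by (rule finite_subset[OF _ finite_PiE])
    have colour_v: "\<kappa> v \<in> S" if "\<kappa> \<in> ?A" for \<kappa>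
      using support[OF that] \<open>v \<in> V\<close> by (force simp: S_def mon_support_def PiE_iff)
    then have "?A = (\<Union>c\<in>S. ?Ac c)" by blast
    moreover have "finite (?Ac c)" for c
      using \<open>finite ?A\<close> by (rule finite_subset[rotated]) blast
    ultimately have "card ?A = (\<Sum>c\<in>S. card (?Ac c))"
      using card_UN_disjoint[OF \<open>finite S\<close>, of ?Ac] by auto
    then show ?thesis by (simp add: chrom_sym_def chrom_Z_def S_def)
  qed
qed

lemma ser_mult_sum_left:
  "ser_mult (\<lambda>\<beta>. \<Sum>c\<in>S. g c \<beta>) f \<alpha> = (\<Sum>c\<in>S. ser_mult (g c) f \<alpha>)"
  unfolding ser_mult_def by (simp add: sum_distrib_right sum.swap[of _ S])

lemma ser_mult_cong_below:
  assumes "\<And>\<beta>. \<forall>k. \<beta> k \<le> \<alpha> k \<Longrightarrow> f \<beta> = f' \<beta>"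
  shows "ser_mult f g \<alpha> = ser_mult f' g \<alpha>"
  unfolding ser_mult_def using assms by (intro sum.cong) auto

text \<open>The sum in \<^const>\<open>ser_mult\<close> ranges over an infinite set, hence is \<open>0\<close> by convention.\<close>

lemma ser_mult_infinite_support:
  assumes "infinite (mon_support \<alpha>)"
  shows "ser_mult f g \<alpha> = 0"
proof -
  let ?single = "\<lambda>j. (\<lambda>k. if k = j then \<alpha> j else 0)"
  have "inj_on ?single (mon_support \<alpha>)"
    by (rule inj_onI) (metis (mono_tags, lifting) mem_Collect_eq mon_support_def)
  moreover have "?single ` mon_support \<alpha> \<subseteq> {\<beta>. \<forall>k. \<beta> k \<le> \<alpha> k}" by auto
  ultimately have "infinite {\<beta>. \<forall>k. \<beta> k \<le> \<alpha> k}"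
    using assms finite_subset inj_on_finite by blast
  then show ?thesis by (simp add: ser_mult_def)
qed

lemma power_sum_eq_sum_var_pow:
  assumes "1 \<le> i" and "finite S" and "0 \<notin> S" and "{c. 1 \<le> c \<and> \<beta> c \<noteq> 0} \<subseteq> S"
  shows "(power_sum i \<beta> :: 'r::comm_semiring_1) = (\<Sum>c\<in>S. var_pow c i \<beta>)"
proof (cases "\<exists>j\<ge>1. \<beta> = (\<lambda>k. if k = j then i else 0)")
  case True
  then obtain j where "1 \<le> j" and \<beta>: "\<beta> = (\<lambda>k. if k = j then i else 0)" by blast
  then have "j \<in> S" using assms by auto
  have "var_pow c i \<beta> = (if c = j then 1 else 0 :: 'r)" for c
    using \<open>1 \<le> i\<close> by (auto simp: var_pow_def \<beta> fun_eq_iff)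
  then have "(\<Sum>c\<in>S. var_pow c i \<beta>) = (1 :: 'r)" using \<open>finite S\<close> \<open>j \<in> S\<close> by simp
  with True show ?thesis by (simp add: power_sum_def)
next
  case False
  have "var_pow c i \<beta> = (0 :: 'r)" if "c \<in> S" for c
  proof -
    have "1 \<le> c" using that \<open>0 \<notin> S\<close> by (cases c) auto
    with False show ?thesis by (auto simp: var_pow_def)
  qed
  then show ?thesis using False by (simp add: power_sum_def)
qed

lemma ser_mult_power_sum:
  assumes "1 \<le> i"
  shows "ser_mult (power_sum i) f \<alpha> = (\<Sum>c\<in>{c. 1 \<le> c \<and> \<alpha> c \<noteq> 0}. ser_mult (var_pow c i) f \<alpha>)"
proof (cases "finite (mon_support \<alpha>)")
  case True
  define S where "S = {c. 1 \<le> c \<and> \<alpha> c \<noteq> 0}"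
  have "finite S" using True by (auto simp: S_def mon_support_def intro: finite_subset)
  have "0 \<notin> S" by (simp add: S_def)
  have "ser_mult (power_sum i) f \<alpha> = ser_mult (\<lambda>\<beta>. \<Sum>c\<in>S. var_pow c i \<beta>) f \<alpha>"
  proof (rule ser_mult_cong_below)
    fix \<beta> :: mon assume "\<forall>k. \<beta> k \<le> \<alpha> k"
    have "{c. 1 \<le> c \<and> \<beta> c \<noteq> 0} \<subseteq> S"
    proof
      fix c assume "c \<in> {c. 1 \<le> c \<and> \<beta> c \<noteq> 0}"
      moreover have "\<beta> c \<le> \<alpha> c" using \<open>\<forall>k. \<beta> k \<le> \<alpha> k\<close> ..
      ultimately show "c \<in> S" by (simp add: S_def)
    qed
    then show "power_sum i \<beta> = (\<Sum>c\<in>S. var_pow c i \<beta>)"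
      by (rule power_sum_eq_sum_var_pow[OF \<open>1 \<le> i\<close> \<open>finite S\<close> \<open>0 \<notin> S\<close>])
  qed
  then show ?thesis by (simp add: ser_mult_sum_left S_def)
next
  case False
  have "mon_support \<alpha> \<subseteq> insert 0 {c. 1 \<le> c \<and> \<alpha> c \<noteq> 0}"
    by (auto simp: mon_support_def)
  with False have "infinite {c. 1 \<le> c \<and> \<alpha> c \<noteq> 0}"
    using finite_subset by blast
  then show ?thesis using ser_mult_infinite_support[OF False] by simp
qed

theorem corollary3p6:
  fixes V :: "'a set" and E :: "'a set set" and v :: 'a and F :: "nat \<Rightarrow> rat ser"
  assumes "is_tree V E" and "v \<in> V" and "is_SFS V E v F"
  shows "chrom_sym V E = (\<lambda>\<alpha>. \<Sum>i=1..card V. ser_mult (power_sum i) (F i) \<alpha>)"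
proof
  fix \<alpha> :: mon
  let ?S = "{c. 1 \<le> c \<and> \<alpha> c \<noteq> 0}"
  have "finite V" using assms(1) by (simp add: is_tree_def simple_graph_def)
  have Z: "chrom_Z V E v c \<alpha> = (\<Sum>i=1..card V. ser_mult (var_pow c i) (F i) \<alpha>)" if "c \<in> ?S" for c
    using assms(3) that unfolding is_SFS_def by simp
  have "chrom_sym V E \<alpha> = (\<Sum>c\<in>?S. chrom_Z V E v c \<alpha>)"
    using chrom_sym_eq_sum_chrom_Z[OF \<open>finite V\<close> \<open>v \<in> V\<close>] .
  also have "\<dots> = (\<Sum>c\<in>?S. \<Sum>i=1..card V. ser_mult (var_pow c i) (F i) \<alpha>)"
    using Z by (rule sum.cong[OF refl])
  also have "\<dots> = (\<Sum>i=1..card V. \<Sum>c\<in>?S. ser_mult (var_pow c i) (F i) \<alpha>)"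
    by (rule sum.swap)
  also have "\<dots> = (\<Sum>i=1..card V. ser_mult (power_sum i) (F i) \<alpha>)"
    by (rule sum.cong) (simp_all add: ser_mult_power_sum)
  finally show "chrom_sym V E \<alpha> = (\<Sum>i=1..card V. ser_mult (power_sum i) (F i) \<alpha>)" .
qed

end
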